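(* Let $\mathcal{A}$ be a unital dual Banach algebra. If $\mathcal{A}$ is Johnson pseudo-Connes amenable, then $\mathcal{A}$ is approximately Connes amenable.
   Context: A dual Banach algebra is a Banach algebra $\mathcal{A}$ together with a closed $\mathcal{A}$-submodule $\mathcal{A}_*$ of $\mathcal{A}^*$ such that $\mathcal{A}=(\mathcal{A}_* )^*$. A Banach $\mathcal{A}$-bimodule $E$ is normal dual if $E=(E_* )^*$ for a closed submodule $E_*$ of $E^*$ and the module maps $a\mapsto a\cdot x$, $a\mapsto x\cdot a$ are weak$^*$-weak$^*$ continuous. $\mathcal{A}$ is approximately Connes amenable if for every normal dual Banach $\mathcal{A}$-bimodule $E$, every weak$^*$-continuous derivation $D:\mathcal{A}\to E$ is approximately inner, i.e. there is a net $(x_\alpha)$ in $E$ with $D(a)=\lim_\alpha(a\cdot x_\alpha-x_\alpha\cdot a)$ for all $a$. For a bimodule $E$, $\sigma wc(E)$ is the set of $x\in E$ for which $a\mapsto a\cdot x$, $a\mapsto x\cdot a$ are weak$^*$-weak continuous. $\mathcal{A}\hat{\otimes}\mathcal{A}$ has actions $a\cdot(b\otimes c)=ab\otimes c$, $(b\otimes c)\cdot a=b\otimes ca$; duals carry the dual actions. $\pi_{\mathcal{A}}$ is the multiplication map $\mathcal{A}\hat{\otimes}\mathcal{A}\to\mathcal{A}$, $i_{\mathcal{A}_*}:\mathcal{A}_*\hookrightarrow\mathcal{A}^*$ the canonical embedding. $\mathcal{A}$ is Johnson pseudo-Connes amenable if there is a (not necessarily bounded) net $(m_\alpha)$ in $(\mathcal{A}\hat{\otimes}\mathcal{A})^{**}$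 with $\langle T,a\cdot m_\alpha\rangle=\langle T,m_\alpha\cdot a\rangle$ for all $a\in\mathcal{A}$, $T\in\sigma wc((\mathcal{A}\hat{\otimes}\mathcal{A})^* )$, $\alpha$, and $i_{\mathcal{A}_*}^*\pi_{\mathcal{A}}^{**}(m_\alpha)a\to a$ for every $a\in\mathcal{A}$. *)

theory Defs
  imports "HOL-Analysis.Analysis"
begin

(* All Banach spaces are over the reals (the library's bounded linear
  functions are real-linear).  Duals are X =>L real. *)

definition initial_top :: "('x \<Rightarrow> real) set \<Rightarrow> 'x topology" where
  "initial_top \<Phi> = topology_generated_by {\<phi> -` U | \<phi> U. \<phi> \<in> \<Phi> \<and> open U}"

definition wstar_top :: "('x::real_normed_vector \<Rightarrow>\<^sub>L real) set \<Rightarrow> 'x topology" where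
  "wstar_top Q = initial_top (blinfun_apply ` Q)"

definition weak_top :: "'x::real_normed_vector topology" where
  "weak_top = initial_top (range (blinfun_apply :: ('x \<Rightarrow>\<^sub>L real) \<Rightarrow> 'x \<Rightarrow> real))"

(* Q is a closed subspace of X^d and X = Q^d isometrically via the
  canonical map x \<mapsto> (\<phi> \<mapsto> \<phi> x). *)
definition is_predual :: "('x::real_normed_vector \<Rightarrow>\<^sub>L real) set \<Rightarrow> bool" where
  "is_predual Q \<longleftrightarrow> subspace Q \<and> closed Q \<and>
     (\<forall>g :: ('x \<Rightarrow>\<^sub>L real) \<Rightarrow> real.
        ((\<forall>\<phi>\<in>Q. \<forall>\<psi>\<in>Q. g (\<phi> + \<psi>) = g \<phi> + g \<psi>) \<and> (\<forall>\<phi>\<in>Q. \<forall>c. g (c *\<^sub>R \<phi>) = c * g \<phi>) \<and>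
         (\<exists>K. \<forall>\<phi>\<in>Q. \<bar>g \<phi>\<bar> \<le> K * norm \<phi>))
        \<longrightarrow> (\<exists>!x. \<forall>\<phi>\<in>Q. g \<phi> = blinfun_apply \<phi> x)) \<and>
     (\<forall>x. norm x = Sup {\<bar>blinfun_apply \<phi> x\<bar> | \<phi>. \<phi> \<in> Q \<and> norm \<phi> \<le> 1})"

definition dual_banach_algebra :: "('a::{real_normed_algebra,banach} \<Rightarrow>\<^sub>L real) set \<Rightarrow> bool" where
  "dual_banach_algebra P \<longleftrightarrow> is_predual P \<and>
     (\<forall>\<phi>\<in>P. \<forall>a. Blinfun (\<lambda>b. blinfun_apply \<phi> (a * b)) \<in> P \<and>
                 Blinfun (\<lambda>b. blinfun_apply \<phi> (b * a)) \<in> P)"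

definition unital_algebra :: "'a::real_normed_algebra itself \<Rightarrow> bool" where
  "unital_algebra _ \<longleftrightarrow> (\<exists>e::'a. \<forall>a. e * a = a \<and> a * e = a)"

definition banach_bimodule ::
  "('a::{real_normed_algebra,banach} \<Rightarrow> 'e::banach \<Rightarrow> 'e) \<Rightarrow> ('e \<Rightarrow> 'a \<Rightarrow> 'e) \<Rightarrow> bool" where
  "banach_bimodule l r \<longleftrightarrow> bounded_bilinear l \<and> bounded_bilinear r \<and>
     (\<forall>a b x. l (a * b) x = l a (l b x)) \<and>
     (\<forall>a b x. r x (a * b) = r (r x a) b) \<and>
     (\<forall>a b x. r (l a x) b = l a (r x b))"

definition normal_dual_bimodule ::
  "('a::{real_normed_algebra,banach} \<Rightarrow>\<^sub>L real) set \<Rightarrow> ('a \<Rightarrow> 'e::banach \<Rightarrow> 'e) \<Rightarrow> ('e \<Rightarrow> 'a \<Rightarrow> 'e)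
    \<Rightarrow> ('e \<Rightarrow>\<^sub>L real) set \<Rightarrow> bool" where
  "normal_dual_bimodule P l r Q \<longleftrightarrow> banach_bimodule l r \<and> is_predual Q \<and>
     (\<forall>\<psi>\<in>Q. \<forall>a. Blinfun (\<lambda>x. blinfun_apply \<psi> (l a x)) \<in> Q \<and>
                 Blinfun (\<lambda>x. blinfun_apply \<psi> (r x a)) \<in> Q) \<and>
     (\<forall>x. continuous_map (wstar_top P) (wstar_top Q) (\<lambda>a. l a x) \<and>
          continuous_map (wstar_top P) (wstar_top Q) (\<lambda>a. r x a))"

definition wstar_derivation ::
  "('a::{real_normed_algebra,banach} \<Rightarrow>\<^sub>L real) set \<Rightarrow> ('a \<Rightarrow> 'e::banach \<Rightarrow> 'e) \<Rightarrow> ('e \<Rightarrow> 'a \<Rightarrow> 'e)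
    \<Rightarrow> ('e \<Rightarrow>\<^sub>L real) set \<Rightarrow> ('a \<Rightarrow> 'e) \<Rightarrow> bool" where
  "wstar_derivation P l r Q D \<longleftrightarrow> bounded_linear D \<and>
     (\<forall>a b. D (a * b) = l a (D b) + r (D a) b) \<and>
     continuous_map (wstar_top P) (wstar_top Q) D"

(* Approximately inner: D a = lim (a x_\<alpha> - x_\<alpha> a) in norm, for some net.
  A net in E is encoded by the (proper) filter it induces on E. *)
definition approx_inner ::
  "('a \<Rightarrow> 'e::real_normed_vector \<Rightarrow> 'e) \<Rightarrow> ('e \<Rightarrow> 'a \<Rightarrow> 'e) \<Rightarrow> ('a \<Rightarrow> 'e) \<Rightarrow> bool" where
  "approx_inner l r D \<longleftrightarrow> (\<exists>F :: 'e filter. F \<noteq> bot \<and>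
     (\<forall>a. ((\<lambda>x. l a x - r x a) \<longlongrightarrow> D a) F))"

(* Approximate Connes amenability, tested against all normal dual bimodules
  whose underlying Banach space is the type 'e. *)
definition approx_connes_amenable_on ::
  "('a::{real_normed_algebra,banach} \<Rightarrow>\<^sub>L real) set \<Rightarrow> 'e::banach itself \<Rightarrow> bool" where
  "approx_connes_amenable_on P _ \<longleftrightarrow>
     (\<forall>(l :: 'a \<Rightarrow> 'e \<Rightarrow> 'e) r Q D.
        normal_dual_bimodule P l r Q \<and> wstar_derivation P l r Q D \<longrightarrow> approx_inner l r D)"

(* (A \<otimes>^ A)^d is identified with bounded bilinear forms A \<times> A \<rightarrow> R,
  i.e. with A =>L (A =>L real), where T b c = <T, b \<otimes> c>.
  Hence (A \<otimes>^ A)^dd = (A =>L A =>L real) =>L real. *)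

(* Dual right action: <T\<cdot>a, b\<otimes>c> = <T, ab\<otimes>c>. *)
definition tdual_ract :: "('a::{real_normed_algebra,banach} \<Rightarrow>\<^sub>L 'a \<Rightarrow>\<^sub>L real) \<Rightarrow> 'a \<Rightarrow> ('a \<Rightarrow>\<^sub>L 'a \<Rightarrow>\<^sub>L real)" where
  "tdual_ract T a = Blinfun (\<lambda>b. blinfun_apply T (a * b))"

(* Dual left action: <a\<cdot>T, b\<otimes>c> = <T, b\<otimes>ca>. *)
definition tdual_lact :: "'a::{real_normed_algebra,banach} \<Rightarrow> ('a \<Rightarrow>\<^sub>L 'a \<Rightarrow>\<^sub>L real) \<Rightarrow> ('a \<Rightarrow>\<^sub>L 'a \<Rightarrow>\<^sub>L real)" where
  "tdual_lact a T = Blinfun (\<lambda>b. Blinfun (\<lambda>c. blinfun_apply (blinfun_apply T b) (c * a)))"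

definition sigma_wc :: "('a::{real_normed_algebra,banach} \<Rightarrow>\<^sub>L real) set \<Rightarrow> ('a \<Rightarrow>\<^sub>L 'a \<Rightarrow>\<^sub>L real) set" where
  "sigma_wc P = {T. continuous_map (wstar_top P) weak_top (\<lambda>a. tdual_lact a T) \<and>
                    continuous_map (wstar_top P) weak_top (\<lambda>a. tdual_ract T a)}"

definition pi_star :: "('a::{real_normed_algebra,banach} \<Rightarrow>\<^sub>L real) \<Rightarrow> ('a \<Rightarrow>\<^sub>L 'a \<Rightarrow>\<^sub>L real)" where
  "pi_star \<phi> = Blinfun (\<lambda>b. Blinfun (\<lambda>c. blinfun_apply \<phi> (b * c)))"

(* i_{A_pre}^d \<pi>^dd (m), as an element of A = (A_pre)^d: the u with
  \<phi>(u) = <\<pi>^dd m, i(\<phi>)> = m(\<pi>^d \<phi>) for all \<phi> in A_pre. *)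
definition diag_elem :: "('a::{real_normed_algebra,banach} \<Rightarrow>\<^sub>L real) set
    \<Rightarrow> (('a \<Rightarrow>\<^sub>L 'a \<Rightarrow>\<^sub>L real) \<Rightarrow>\<^sub>L real) \<Rightarrow> 'a" where
  "diag_elem P m = (THE u. \<forall>\<phi>\<in>P. blinfun_apply \<phi> u = blinfun_apply m (pi_star \<phi>))"

(* Johnson pseudo-Connes amenability; the (possibly unbounded) net (m_\<alpha>)
  is encoded by the proper filter it induces on (A \<otimes>^ A)^dd. *)
definition johnson_pseudo_connes_amenable :: "('a::{real_normed_algebra,banach} \<Rightarrow>\<^sub>L real) set \<Rightarrow> bool" where
  "johnson_pseudo_connes_amenable P \<longleftrightarrow>
     (\<exists>F :: (('a \<Rightarrow>\<^sub>L 'a \<Rightarrow>\<^sub>L real) \<Rightarrow>\<^sub>L real) filter. F \<noteq> bot \<and>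
        (\<forall>\<^sub>F m in F. \<forall>a. \<forall>T\<in>sigma_wc P.
            blinfun_apply m (tdual_ract T a) = blinfun_apply m (tdual_lact a T)) \<and>
        (\<forall>a. ((\<lambda>m. diag_elem P m * a) \<longlongrightarrow> a) F))"

end

theory Submission
  imports Defs
begin

(* For a weak-star continuous derivation D : A \<rightarrow> E and \<psi> in the predual E_pre, the bilinear form
  T_\<psi>(b, c) = \<psi>(b \<cdot> D c) lies in \<sigma>wc of the dual of A \<otimes> A; this is where normality of E is used,
  together with the fact that weak-star continuous functionals on A belong to A_pre.  Pairing T_\<psi>
  with m_\<alpha> defines points \<eta>_\<alpha> of E, the dual of E_pre, and by the Leibniz rule the commutation
  property of m_\<alpha> becomes a \<cdot> \<eta>_\<alpha> - \<eta>_\<alpha> \<cdot> a = u_\<alpha> \<cdot> D a with u_\<alpha> = diag_elem P m_\<alpha>.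
  Since u_\<alpha> \<rightarrow> e, these commutators converge to e \<cdot> D a = D a - (D e) \<cdot> a, and shifting \<eta>_\<alpha> by
  (D e) \<cdot> e removes the last term. *)

section \<open>Bilinear forms and adjoints of bilinear maps\<close>

lemma bounded_linear_Blinfun_curry:
  assumes "bounded_bilinear G"
  shows "bounded_linear (\<lambda>x. Blinfun (G x))"
proof -
  interpret G: bounded_bilinear G by fact
  have "Blinfun (G x) = G.prod_right x" for x
    by (intro blinfun_eqI) (simp add: bounded_linear_Blinfun_apply G.bounded_linear_right)
  then show ?thesis
    using G.bounded_linear_prod_right by presburger
qed

lemma Blinfun_curry_apply:
  "bounded_bilinear G \<Longrightarrow> Blinfun (\<lambda>x. Blinfun (G x)) x y = G x y"
  by (simp add: bounded_linear_Blinfun_apply bounded_linear_Blinfun_curry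
      bounded_bilinear.bounded_linear_right)

(* Reading the dual of A \<otimes> A as bilinear forms on A, bilinear_adjoint F is the adjoint of the
  linearisation of a bounded bilinear F : A \<times> A \<rightarrow> E. *)
definition bilinear_adjoint ::
  "('a::real_normed_vector \<Rightarrow> 'b::real_normed_vector \<Rightarrow> 'c::real_normed_vector)
    \<Rightarrow> ('c \<Rightarrow>\<^sub>L real) \<Rightarrow> ('a \<Rightarrow>\<^sub>L 'b \<Rightarrow>\<^sub>L real)" where
  "bilinear_adjoint F \<psi> = Blinfun (\<lambda>x. Blinfun (\<lambda>y. \<psi> (F x y)))"

context bounded_bilinear
begin

lemma bounded_bilinear_compose_prod_right:
  "bounded_bilinear (\<lambda>(\<psi>::'c \<Rightarrow>\<^sub>L real) x. \<psi> o\<^sub>L prod_right x)"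
  by (rule bounded_bilinear.comp[OF bounded_bilinear_blinfun_compose bounded_linear_ident
        bounded_linear_prod_right])

lemma bilinear_adjoint_eq: "bilinear_adjoint prod \<psi> = Blinfun (\<lambda>x. \<psi> o\<^sub>L prod_right x)"
  unfolding bilinear_adjoint_def by (intro arg_cong[where f = Blinfun] ext blinfun_eqI)
    (simp add: bounded_linear_Blinfun_apply bounded_linear_compose[OF blinfun.bounded_linear_right bounded_linear_right])

lemma bounded_linear_bilinear_adjoint: "bounded_linear (bilinear_adjoint prod)"
  unfolding bilinear_adjoint_eq
  by (rule bounded_linear_Blinfun_curry[OF bounded_bilinear_compose_prod_right])

lemma bilinear_adjoint_apply: "bilinear_adjoint prod \<psi> x y = \<psi> (prod x y)"
  by (simp add: bilinear_adjoint_eq bounded_linear_Blinfun_apply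
      bounded_bilinear.bounded_linear_right[OF bounded_bilinear_compose_prod_right])

end

lemma pi_star_eq_bilinear_adjoint: "pi_star = bilinear_adjoint (*)"
  by (simp add: fun_eq_iff pi_star_def bilinear_adjoint_def)

lemma bounded_linear_pi_star: "bounded_linear pi_star"
  unfolding pi_star_eq_bilinear_adjoint
  by (rule bounded_bilinear.bounded_linear_bilinear_adjoint[OF bounded_bilinear_mult])

lemma tdual_ract_apply: "tdual_ract T a b = T (a * b)"
  unfolding tdual_ract_def
  by (simp add: bounded_linear_Blinfun_apply bounded_linear_compose[OF blinfun.bounded_linear_right bounded_linear_mult_right])

lemma tdual_lact_apply: "tdual_lact a T b c = T b (c * a)"
  unfolding tdual_lact_def
  by (rule Blinfun_curry_apply, rule bounded_bilinear.comp[OF bounded_bilinear.comp1[OF bounded_bilinear_blinfun_apply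
        blinfun.bounded_linear_right] bounded_linear_ident bounded_linear_mult_left])

section \<open>Initial and weak-star topologies\<close>

lemma topspace_initial_top: "\<Phi> \<noteq> {} \<Longrightarrow> topspace (initial_top \<Phi>) = UNIV"
  unfolding initial_top_def topology_generated_by_topspace
  by (force intro: exI[of _ UNIV])

lemma continuous_map_initial_top:
  assumes "\<phi> \<in> \<Phi>"
  shows "continuous_map (initial_top \<Phi>) euclidean \<phi>"
proof -
  have "openin (initial_top \<Phi>) (\<phi> -` U)" if "open U" for U
    unfolding initial_top_def using assms that by (intro topology_generated_by_Basis) blast
  moreover have "topspace (initial_top \<Phi>) = UNIV"
    using assms by (intro topspace_initial_top) blast
  ultimately show ?thesis
    by (simp add: continuous_map_def vimage_def)
qed

lemma continuous_map_into_initial_top: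
  assumes "\<Phi> \<noteq> {}" and "\<And>\<phi>. \<phi> \<in> \<Phi> \<Longrightarrow> continuous_map X euclidean (\<lambda>x. \<phi> (g x))"
  shows "continuous_map X (initial_top \<Phi>) g"
  unfolding initial_top_def
proof (rule continuous_on_generated_topo)
  fix U assume "U \<in> {\<phi> -` U | \<phi> U. \<phi> \<in> \<Phi> \<and> open U}"
  then obtain \<phi> V where "U = \<phi> -` V" "\<phi> \<in> \<Phi>" "open V" by blast
  then have "openin X {x \<in> topspace X. \<phi> (g x) \<in> V}"
    using assms(2)[of \<phi>] by (simp add: continuous_map_def)
  moreover have "{x \<in> topspace X. \<phi> (g x) \<in> V} = g -` U \<inter> topspace X"
    using \<open>U = \<phi> -` V\<close> by auto
  ultimately show "openin X (g -` U \<inter> topspace X)" by simp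
qed (use topspace_initial_top[OF assms(1)] in \<open>simp add: initial_top_def\<close>)

lemma openin_initial_top_nhds:
  assumes "openin (initial_top \<Phi>) W" and "x \<in> W"
  shows "\<exists>M e. finite M \<and> M \<subseteq> \<Phi> \<and> e > 0 \<and> {y. \<forall>\<phi>\<in>M. \<bar>\<phi> y - \<phi> x\<bar> < e} \<subseteq> W"
proof -
  have "generate_topology_on {\<phi> -` U | \<phi> U. \<phi> \<in> \<Phi> \<and> open U} W"
    using assms(1) unfolding initial_top_def by (rule openin_topology_generated_by)
  then show ?thesis
    using assms(2)
  proof (induction arbitrary: x rule: generate_topology_on.induct)
    case (Int V W)
    then obtain M1 e1 M2 e2 where "finite M1" "M1 \<subseteq> \<Phi>" "e1 > 0"
        "{y. \<forall>\<phi>\<in>M1. \<bar>\<phi> y - \<phi> x\<bar> < e1} \<subseteq> V"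
      and "finite M2" "M2 \<subseteq> \<Phi>" "e2 > 0" "{y. \<forall>\<phi>\<in>M2. \<bar>\<phi> y - \<phi> x\<bar> < e2} \<subseteq> W"
      by (meson IntD1 IntD2)
    then show ?case
      by (intro exI[of _ "M1 \<union> M2"] exI[of _ "min e1 e2"]) force
  next
    case (UN K)
    then show ?case by (meson Union_iff Union_upper order_trans)
  next
    case (Basis S)
    then obtain \<phi> U where S: "S = \<phi> -` U" "\<phi> \<in> \<Phi>" "open U" by blast
    then obtain e where "e > 0" "\<And>t. dist t (\<phi> x) < e \<Longrightarrow> t \<in> U"
      using Basis.prems unfolding open_dist by blast
    with S show ?case
      by (intro exI[of _ "{\<phi>}"] exI[of _ e]) (auto simp: dist_real_def)
  qed simp
qed

lemma linear_combination_of_kernels: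
  fixes f :: "'a::real_vector \<Rightarrow> real" and M :: "('a \<Rightarrow> real) set"
  assumes "finite M" and "\<And>p. p \<in> M \<Longrightarrow> linear p" and "linear f" and "subspace S"
    and "\<And>y. y \<in> S \<Longrightarrow> (\<forall>p\<in>M. p y = 0) \<Longrightarrow> f y = 0"
  shows "\<exists>c. \<forall>y\<in>S. f y = (\<Sum>p\<in>M. c p * p y)"
  using assms(1,2,4,5)
proof (induction M arbitrary: S rule: finite_induct)
  case empty
  then show ?case by simp
next
  case (insert q M)
  have "linear q" using insert.prems(1) by blast
  define S' where "S' = {y \<in> S. q y = 0}"
  have "\<exists>c. \<forall>y\<in>S'. f y = (\<Sum>p\<in>M. c p * p y)"
  proof (rule insert.IH)
    show "subspace S'"
      using \<open>subspace S\<close> \<open>linear q\<close>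
      by (auto simp: S'_def subspace_def linear_0 linear_add linear_scale)
    show "f y = 0" if "y \<in> S'" "\<forall>p\<in>M. p y = 0" for y
      using that insert.prems(3) by (simp add: S'_def)
  qed (use insert.prems(1) in blast)
  then obtain c where c: "\<And>y. y \<in> S' \<Longrightarrow> f y = (\<Sum>p\<in>M. c p * p y)" by blast
  show ?case
  proof (cases "\<exists>v\<in>S. q v \<noteq> 0")
    case False
    then have "S' = S" by (auto simp: S'_def)
    then show ?thesis
      using c insert.hyps by (intro exI[of _ "c(q := 0)"]) (auto intro!: sum.cong)
  next
    case True
    then obtain v where v: "v \<in> S" "q v \<noteq> 0" by blast
    define g where "g y = f y - (\<Sum>p\<in>M. c p * p y)" for y
    have "linear (\<lambda>y. k * p y)" if "linear p" for p and k :: real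
      using linear_compose_scale_right[OF that, of k] by simp
    then have "linear g"
      unfolding g_def using insert.prems(1) \<open>linear f\<close>
      by (intro linear_compose_sub linear_compose_sum) auto
    show ?thesis
    proof (intro exI[of _ "c(q := g v / q v)"] ballI)
      fix y assume "y \<in> S"
      define t where "t = q y / q v"
      have "q (y - t *\<^sub>R v) = 0"
        using v by (simp add: linear_diff[OF \<open>linear q\<close>] linear_scale[OF \<open>linear q\<close>] t_def)
      moreover have "y - t *\<^sub>R v \<in> S"
        using \<open>y \<in> S\<close> v \<open>subspace S\<close> by (simp add: subspace_diff subspace_scale)
      ultimately have "g (y - t *\<^sub>R v) = 0"
        using c by (simp add: S'_def g_def)
      then have "g y = t * g v"
        by (simp add: linear_diff[OF \<open>linear g\<close>] linear_scale[OF \<open>linear g\<close>])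
      then have "g y = g v / q v * q y"
        by (simp add: t_def)
      then have "f y = g v / q v * q y + (\<Sum>p\<in>M. c p * p y)"
        by (simp add: g_def)
      also have "\<dots> = (\<Sum>p\<in>insert q M. (c(q := g v / q v)) p * p y)"
        using insert.hyps by (auto intro!: sum.cong)
      finally show "f y = (\<Sum>p\<in>insert q M. (c(q := g v / q v)) p * p y)" .
    qed
  qed
qed

lemma topspace_wstar_top: "subspace Q \<Longrightarrow> topspace (wstar_top Q) = UNIV"
  unfolding wstar_top_def by (rule topspace_initial_top) (use subspace_0 in blast)

lemma continuous_map_wstar_top: "\<psi> \<in> Q \<Longrightarrow> continuous_map (wstar_top Q) euclidean \<psi>"
  unfolding wstar_top_def by (rule continuous_map_initial_top) simp

lemma continuous_map_into_weak_top:
  fixes g :: "'y \<Rightarrow> 'x::real_normed_vector"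
  assumes "\<And>\<Phi> :: 'x \<Rightarrow>\<^sub>L real. continuous_map X euclidean (\<lambda>x. \<Phi> (g x))"
  shows "continuous_map X weak_top g"
  unfolding weak_top_def by (rule continuous_map_into_initial_top) (auto intro: assms)

lemma wstar_continuous_functional_in_predual:
  fixes \<phi> :: "'x::real_normed_vector \<Rightarrow>\<^sub>L real"
  assumes "subspace P" and "continuous_map (wstar_top P) euclidean \<phi>"
  shows "\<phi> \<in> P"
proof -
  define W where "W = blinfun_apply \<phi> -` {-1<..<1}"
  have "openin (wstar_top P) W"
    using assms openin_continuous_map_preimage[OF assms(2), of "{-1<..<1}"]
    by (simp add: W_def topspace_wstar_top vimage_def)
  moreover have "0 \<in> W" by (simp add: W_def)
  ultimately obtain N e where "finite N" "N \<subseteq> blinfun_apply ` P" "e > 0"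
      and N: "{y. \<forall>p\<in>N. \<bar>p y - p 0\<bar> < e} \<subseteq> W"
    using openin_initial_top_nhds[of "blinfun_apply ` P" W 0] unfolding wstar_top_def by blast
  then obtain M where "finite M" "M \<subseteq> P" and N_def: "N = blinfun_apply ` M"
    by (meson finite_subset_image)
  txt \<open>Being bounded on a weak-star neighbourhood of \<open>0\<close>, \<open>\<phi>\<close> vanishes on the common kernel of \<open>N\<close>.\<close>
  have "\<phi> y = 0" if "\<forall>p\<in>N. p y = 0" for y
  proof (rule ccontr)
    assume "\<phi> y \<noteq> 0"
    define t where "t = 2 / \<bar>\<phi> y\<bar>"
    have "t *\<^sub>R y \<in> W"
      using N that \<open>e > 0\<close> unfolding N_def by (auto simp: blinfun.scaleR_right)
    then have "\<bar>\<phi> (t *\<^sub>R y)\<bar> < 1"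
      by (simp add: W_def abs_less_iff)
    moreover have "\<bar>\<phi> (t *\<^sub>R y)\<bar> = 2"
      using \<open>\<phi> y \<noteq> 0\<close> by (simp add: t_def blinfun.scaleR_right abs_mult)
    ultimately show False by simp
  qed
  moreover have "linear (blinfun_apply p)" for p :: "'x \<Rightarrow>\<^sub>L real"
    by (rule bounded_linear.linear[OF blinfun.bounded_linear_right])
  ultimately obtain c where c: "\<And>y. \<phi> y = (\<Sum>p\<in>N. c p * p y)"
    using linear_combination_of_kernels[OF \<open>finite N\<close> _ _ subspace_UNIV, of "blinfun_apply \<phi>"]
    unfolding N_def by blast
  have "inj_on blinfun_apply M"
    by (simp add: inj_on_def blinfun_apply_inject)
  then have "\<phi> y = (\<Sum>p\<in>M. c (blinfun_apply p) * p y)" for y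
    by (simp add: c N_def sum.reindex)
  then have "\<phi> = (\<Sum>p\<in>M. c (blinfun_apply p) *\<^sub>R p)"
    by (intro blinfun_eqI) (simp add: blinfun.sum_left blinfun.scaleR_left)
  also have "\<dots> \<in> P"
    using \<open>M \<subseteq> P\<close> by (intro subspace_sum[OF assms(1)] subspace_scale[OF assms(1)]) auto
  finally show ?thesis .
qed

lemma is_predual_ex1_point:
  fixes g :: "('x::real_normed_vector \<Rightarrow>\<^sub>L real) \<Rightarrow> real"
  assumes "is_predual Q" and "bounded_linear g"
  shows "\<exists>!x. \<forall>\<psi>\<in>Q. blinfun_apply \<psi> x = g \<psi>"
proof -
  interpret g: bounded_linear g by fact
  obtain K where "\<And>\<psi>. norm (g \<psi>) \<le> norm \<psi> * K" using g.bounded by blast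
  then have "\<exists>K. \<forall>\<psi>\<in>Q. \<bar>g \<psi>\<bar> \<le> K * norm \<psi>"
    by (intro exI[of _ K]) (simp add: mult.commute)
  then have "\<exists>!x. \<forall>\<psi>\<in>Q. g \<psi> = blinfun_apply \<psi> x"
    using assms(1) unfolding is_predual_def by (simp add: g.add g.scaleR)
  then show ?thesis by (metis (no_types, lifting))
qed

lemma is_predual_eqI:
  fixes Q :: "('x::real_normed_vector \<Rightarrow>\<^sub>L real) set"
  assumes "is_predual Q" and "\<And>\<psi>. \<psi> \<in> Q \<Longrightarrow> blinfun_apply \<psi> x = blinfun_apply \<psi> y"
  shows "x = y"
  using is_predual_ex1_point[OF assms(1) blinfun.bounded_linear_left, of y] assms(2) by blast

definition point_of_functional ::
  "('x::real_normed_vector \<Rightarrow>\<^sub>L real) set \<Rightarrow> (('x \<Rightarrow>\<^sub>L real) \<Rightarrow> real) \<Rightarrow> 'x" where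
  "point_of_functional Q g = (THE x. \<forall>\<psi>\<in>Q. blinfun_apply \<psi> x = g \<psi>)"

lemma point_of_functional:
  fixes g :: "('x::real_normed_vector \<Rightarrow>\<^sub>L real) \<Rightarrow> real"
  assumes "is_predual Q" and "bounded_linear g" and "\<psi> \<in> Q"
  shows "blinfun_apply \<psi> (point_of_functional Q g) = g \<psi>"
  using theI'[OF is_predual_ex1_point[OF assms(1,2)]] assms(3)
  unfolding point_of_functional_def by blast

lemma diag_elem_apply:
  assumes "is_predual P" and "\<phi> \<in> P"
  shows "\<phi> (diag_elem P m) = m (pi_star \<phi>)"
proof -
  have "diag_elem P m = point_of_functional P (\<lambda>\<phi>. m (pi_star \<phi>))"
    by (simp add: diag_elem_def point_of_functional_def)
  also have "\<phi> \<dots> = m (pi_star \<phi>)"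
    by (rule point_of_functional[OF assms(1)
          bounded_linear_compose[OF blinfun.bounded_linear_right bounded_linear_pi_star] assms(2)])
  finally show ?thesis .
qed

section \<open>Normal derivations\<close>

locale normal_wstar_derivation =
  fixes P :: "('a::{real_normed_algebra,banach} \<Rightarrow>\<^sub>L real) set"
    and l :: "'a \<Rightarrow> 'e::banach \<Rightarrow> 'e" and r :: "'e \<Rightarrow> 'a \<Rightarrow> 'e"
    and Q :: "('e \<Rightarrow>\<^sub>L real) set" and D :: "'a \<Rightarrow> 'e"
  assumes predual_P: "is_predual P"
    and normal: "normal_dual_bimodule P l r Q"
    and derivation: "wstar_derivation P l r Q D"
begin

lemma predual_Q: "is_predual Q"
  using normal by (simp add: normal_dual_bimodule_def)

lemma bimodule: "banach_bimodule l r"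
  using normal by (simp add: normal_dual_bimodule_def)

sublocale l: bounded_bilinear l
  using bimodule by (simp add: banach_bimodule_def)

lemma left_assoc: "l (a * b) x = l a (l b x)"
  and left_right_assoc: "r (l a x) b = l a (r x b)"
  and bounded_linear_right_action: "bounded_linear (\<lambda>x. r x a)"
  using bimodule by (simp_all add: banach_bimodule_def bounded_bilinear.bounded_linear_left)

lemma derivation_rule: "D (a * b) = l a (D b) + r (D a) b"
  and bounded_linear_D: "bounded_linear D"
  using derivation by (simp_all add: wstar_derivation_def)

definition predual_ract :: "('e \<Rightarrow>\<^sub>L real) \<Rightarrow> 'a \<Rightarrow> ('e \<Rightarrow>\<^sub>L real)" where
  "predual_ract \<psi> a = Blinfun (\<lambda>x. \<psi> (l a x))"

definition predual_lact :: "'a \<Rightarrow> ('e \<Rightarrow>\<^sub>L real) \<Rightarrow> ('e \<Rightarrow>\<^sub>L real)" where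
  "predual_lact a \<psi> = Blinfun (\<lambda>x. \<psi> (r x a))"

definition left_slice :: "('e \<Rightarrow>\<^sub>L real) \<Rightarrow> 'e \<Rightarrow> ('a \<Rightarrow>\<^sub>L real)" where
  "left_slice \<psi> x = Blinfun (\<lambda>a. \<psi> (l a x))"

lemma predual_ract_apply [simp]: "blinfun_apply (predual_ract \<psi> a) = (\<lambda>x. \<psi> (l a x))"
  and predual_lact_apply [simp]: "blinfun_apply (predual_lact a \<psi>) = (\<lambda>x. \<psi> (r x a))"
  and left_slice_apply [simp]: "blinfun_apply (left_slice \<psi> x) = (\<lambda>a. \<psi> (l a x))"
  unfolding predual_ract_def predual_lact_def left_slice_def
  by (simp_all add: bounded_linear_Blinfun_apply l.bounded_linear_left l.bounded_linear_right
      bounded_linear_right_action bounded_linear_compose[OF blinfun.bounded_linear_right])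

lemma predual_ract_mem: "\<psi> \<in> Q \<Longrightarrow> predual_ract \<psi> a \<in> Q"
  and predual_lact_mem: "\<psi> \<in> Q \<Longrightarrow> predual_lact a \<psi> \<in> Q"
  using normal by (simp_all add: normal_dual_bimodule_def predual_ract_def predual_lact_def)

lemma continuous_map_left:
  "\<psi> \<in> Q \<Longrightarrow> continuous_map (wstar_top P) euclidean (\<lambda>a. \<psi> (l a x))"
  using continuous_map_compose[OF _ continuous_map_wstar_top] normal
  by (force simp: normal_dual_bimodule_def o_def)

lemma continuous_map_right:
  "\<psi> \<in> Q \<Longrightarrow> continuous_map (wstar_top P) euclidean (\<lambda>a. \<psi> (r x a))"
  using continuous_map_compose[OF _ continuous_map_wstar_top] normal
  by (force simp: normal_dual_bimodule_def o_def)

lemma continuous_map_derivation: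
  "\<psi> \<in> Q \<Longrightarrow> continuous_map (wstar_top P) euclidean (\<lambda>a. \<psi> (D a))"
  using continuous_map_compose[OF _ continuous_map_wstar_top] derivation
  by (force simp: wstar_derivation_def o_def)

lemma left_slice_mem: "\<psi> \<in> Q \<Longrightarrow> left_slice \<psi> x \<in> P"
  using predual_P continuous_map_left
  by (intro wstar_continuous_functional_in_predual) (auto simp: is_predual_def)

lemma bounded_bilinear_left_D: "bounded_bilinear (\<lambda>b c. l b (D c))"
  by (rule bounded_bilinear.comp[OF l.bounded_bilinear_axioms bounded_linear_ident bounded_linear_D])

definition derivation_form :: "('e \<Rightarrow>\<^sub>L real) \<Rightarrow> ('a \<Rightarrow>\<^sub>L 'a \<Rightarrow>\<^sub>L real)" where
  "derivation_form = bilinear_adjoint (\<lambda>b c. l b (D c))"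

lemma derivation_form_apply: "derivation_form \<psi> b c = \<psi> (l b (D c))"
  unfolding derivation_form_def by (rule bounded_bilinear.bilinear_adjoint_apply[OF bounded_bilinear_left_D])

lemma bounded_linear_derivation_form: "bounded_linear derivation_form"
  unfolding derivation_form_def by (rule bounded_bilinear.bounded_linear_bilinear_adjoint[OF bounded_bilinear_left_D])

lemma tdual_ract_derivation_form: "tdual_ract (derivation_form \<psi>) a = derivation_form (predual_ract \<psi> a)"
  by (intro blinfun_eqI) (simp add: tdual_ract_apply derivation_form_apply left_assoc)

text \<open>Here the Leibniz rule enters: \<open>b\<cdot>D(ca) = bc\<cdot>D a + (b\<cdot>D c)\<cdot>a\<close>.\<close>

lemma tdual_lact_derivation_form:
  "tdual_lact a (derivation_form \<psi>) = derivation_form (predual_lact a \<psi>) + pi_star (left_slice \<psi> (D a))"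
  by (intro blinfun_eqI) (simp add: tdual_lact_apply derivation_form_apply pi_star_eq_bilinear_adjoint
      bounded_bilinear.bilinear_adjoint_apply[OF bounded_bilinear_mult] derivation_rule left_assoc
      left_right_assoc l.add_right blinfun.add_left blinfun.add_right)

lemma derivation_form_in_sigma_wc:
  assumes "\<psi> \<in> Q"
  shows "derivation_form \<psi> \<in> sigma_wc P"
proof -
  have "continuous_map (wstar_top P) euclidean (\<lambda>a. \<Phi> (tdual_ract (derivation_form \<psi>) a))"
    and "continuous_map (wstar_top P) euclidean (\<lambda>a. \<Phi> (tdual_lact a (derivation_form \<psi>)))"
    for \<Phi> :: "('a \<Rightarrow>\<^sub>L 'a \<Rightarrow>\<^sub>L real) \<Rightarrow>\<^sub>L real"
  proof -
    define y where "y = point_of_functional Q (\<lambda>\<psi>. \<Phi> (derivation_form \<psi>))"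
    have y: "\<Phi> (derivation_form \<theta>) = \<theta> y" if "\<theta> \<in> Q" for \<theta>
      unfolding y_def using point_of_functional[OF predual_Q _ that]
        bounded_linear_compose[OF blinfun.bounded_linear_right bounded_linear_derivation_form] by metis
    have "\<Phi> (tdual_ract (derivation_form \<psi>) a) = \<psi> (l a y)" for a
      using y[OF predual_ract_mem[OF assms]] by (simp add: tdual_ract_derivation_form)
    then show "continuous_map (wstar_top P) euclidean (\<lambda>a. \<Phi> (tdual_ract (derivation_form \<psi>) a))"
      using continuous_map_left[OF assms] by simp
    have "\<Phi> (tdual_lact a (derivation_form \<psi>)) = \<psi> (r y a) + \<psi> (l (diag_elem P \<Phi>) (D a))" for a
      using y[OF predual_lact_mem[OF assms]] diag_elem_apply[OF predual_P left_slice_mem[OF assms]]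
      by (simp add: tdual_lact_derivation_form blinfun.add_right)
    moreover have "continuous_map (wstar_top P) euclidean
        (\<lambda>a. \<psi> (r y a) + \<psi> (l (diag_elem P \<Phi>) (D a)))"
      using continuous_map_derivation[OF predual_ract_mem[OF assms]]
      by (intro continuous_map_add continuous_map_right[OF assms]) simp
    ultimately show "continuous_map (wstar_top P) euclidean (\<lambda>a. \<Phi> (tdual_lact a (derivation_form \<psi>)))"
      by simp
  qed
  then show ?thesis
    by (simp add: sigma_wc_def continuous_map_into_weak_top)
qed

definition inner_net :: "(('a \<Rightarrow>\<^sub>L 'a \<Rightarrow>\<^sub>L real) \<Rightarrow>\<^sub>L real) \<Rightarrow> 'e" where
  "inner_net m = point_of_functional Q (\<lambda>\<psi>. m (derivation_form \<psi>))"

lemma inner_net_apply: "\<psi> \<in> Q \<Longrightarrow> \<psi> (inner_net m) = blinfun_apply m (derivation_form \<psi>)"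
  unfolding inner_net_def
  by (rule point_of_functional[OF predual_Q bounded_linear_compose[OF blinfun.bounded_linear_right
        bounded_linear_derivation_form]])

lemma commutator_inner_net:
  assumes "\<forall>a. \<forall>T\<in>sigma_wc P. blinfun_apply m (tdual_ract T a) = blinfun_apply m (tdual_lact a T)"
  shows "l a (inner_net m) - r (inner_net m) a = l (diag_elem P m) (D a)"
proof (rule is_predual_eqI[OF predual_Q])
  fix \<psi> assume "\<psi> \<in> Q"
  have "\<psi> (l a (inner_net m)) = m (tdual_ract (derivation_form \<psi>) a)"
    using inner_net_apply[OF predual_ract_mem[OF \<open>\<psi> \<in> Q\<close>]] by (simp add: tdual_ract_derivation_form)
  moreover have "\<psi> (r (inner_net m) a) = m (tdual_lact a (derivation_form \<psi>)) - \<psi> (l (diag_elem P m) (D a))"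
    using inner_net_apply[OF predual_lact_mem[OF \<open>\<psi> \<in> Q\<close>]]
      diag_elem_apply[OF predual_P left_slice_mem[OF \<open>\<psi> \<in> Q\<close>]]
    by (simp add: tdual_lact_derivation_form blinfun.add_right)
  ultimately show "\<psi> (l a (inner_net m) - r (inner_net m) a) = \<psi> (l (diag_elem P m) (D a))"
    using assms derivation_form_in_sigma_wc[OF \<open>\<psi> \<in> Q\<close>] by (simp add: blinfun.diff_right)
qed

end

lemma approx_inner_if_commutators_tend_to_unit:
  fixes l :: "'a::{real_normed_algebra,banach} \<Rightarrow> 'e::banach \<Rightarrow> 'e" and u :: "'i \<Rightarrow> 'a"
  assumes "banach_bimodule l r"
    and derivation_rule: "\<And>a b. D (a * b) = l a (D b) + r (D a) b"
    and unit: "\<And>a. e * a = a" "\<And>a. a * e = a"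
    and "F \<noteq> bot"
    and commutators: "\<forall>\<^sub>F i in F. \<forall>a. l a (x i) - r (x i) a = l (u i) (D a)"
    and "(u \<longlongrightarrow> e) F"
  shows "approx_inner l r D"
proof -
  interpret l: bounded_bilinear l
    using assms(1) by (simp add: banach_bimodule_def)
  interpret r: bounded_bilinear r
    using assms(1) by (simp add: banach_bimodule_def)
  have left_assoc: "\<And>a b x. l (a * b) x = l a (l b x)"
    and right_assoc: "\<And>a b x. r x (a * b) = r (r x a) b"
    and left_right_assoc: "\<And>a b x. r (l a x) b = l a (r x b)"
    using assms(1) by (simp_all add: banach_bimodule_def)
  txt \<open>\<open>E\<close> need not be unital: \<open>x0\<close> absorbs the term \<open>(D e)\<cdot>a\<close> in \<open>D a = e\<cdot>D a + (D e)\<cdot>a\<close>.\<close>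
  define x0 where "x0 = r (D e) e"
  have "D e = l e (D e) + x0"
    using derivation_rule[of e e] unit by (simp add: x0_def)
  then have "r (l a (D e)) e = 0" for a
    using l.add_right[of a "l e (D e)" x0] by (simp add: x0_def left_assoc[symmetric] unit left_right_assoc)
  then have x0_commutator: "l a x0 - r x0 a = - r (D e) a" for a
    by (simp add: x0_def left_right_assoc[symmetric] right_assoc[symmetric] unit)
  show ?thesis
    unfolding approx_inner_def
  proof (intro exI[of _ "filtermap (\<lambda>i. x i - x0) F"] conjI allI)
    show "filtermap (\<lambda>i. x i - x0) F \<noteq> bot"
      using \<open>F \<noteq> bot\<close> by (simp add: filtermap_bot_iff)
    fix a
    have shift: "l a (y - x0) - r (y - x0) a = (l a y - r y a) - (l a x0 - r x0 a)" for y
      by (simp add: l.diff_right r.diff_left algebra_simps)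
    have "\<forall>\<^sub>F i in F. l (u i) (D a) + r (D e) a = l a (x i - x0) - r (x i - x0) a"
      using commutators by eventually_elim (simp add: shift x0_commutator)
    moreover have "((\<lambda>i. l (u i) (D a) + r (D e) a) \<longlongrightarrow> l e (D a) + r (D e) a) F"
      by (intro tendsto_add tendsto_const l.tendsto \<open>(u \<longlongrightarrow> e) F\<close>)
    moreover have "l e (D a) + r (D e) a = D a"
      using derivation_rule[of e a] unit by simp
    ultimately have "((\<lambda>i. l a (x i - x0) - r (x i - x0) a) \<longlongrightarrow> D a) F"
      by (simp add: tendsto_cong)
    then show "((\<lambda>y. l a y - r y a) \<longlongrightarrow> D a) (filtermap (\<lambda>i. x i - x0) F)"
      by (simp add: filterlim_filtermap)
  qed
qed

theorem lemma2p5: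
  fixes P :: "('a::{real_normed_algebra,banach} \<Rightarrow>\<^sub>L real) set"
  assumes "dual_banach_algebra P"
    and "unital_algebra TYPE('a)"
    and "johnson_pseudo_connes_amenable P"
  shows "approx_connes_amenable_on P TYPE('e::banach)"
  unfolding approx_connes_amenable_on_def
proof (intro allI impI, elim conjE)
  fix l :: "'a \<Rightarrow> 'e \<Rightarrow> 'e" and r Q D
  assume "normal_dual_bimodule P l r Q" and "wstar_derivation P l r Q D"
  with assms(1) interpret normal_wstar_derivation P l r Q D
    by unfold_locales (simp_all add: dual_banach_algebra_def)
  obtain e :: 'a where unit: "\<And>a. e * a = a" "\<And>a. a * e = a"
    using assms(2) unfolding unital_algebra_def by blast
  obtain F :: "(('a \<Rightarrow>\<^sub>L 'a \<Rightarrow>\<^sub>L real) \<Rightarrow>\<^sub>L real) filter" where "F \<noteq> bot"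
    and commuting: "\<forall>\<^sub>F m in F. \<forall>a. \<forall>T\<in>sigma_wc P. blinfun_apply m (tdual_ract T a) = blinfun_apply m (tdual_lact a T)"
    and approx_unit: "\<And>a. ((\<lambda>m. diag_elem P m * a) \<longlongrightarrow> a) F"
    using assms(3) unfolding johnson_pseudo_connes_amenable_def by blast
  have "\<forall>\<^sub>F m in F. \<forall>a. l a (inner_net m) - r (inner_net m) a = l (diag_elem P m) (D a)"
    using commuting by eventually_elim (simp add: commutator_inner_net)
  moreover have "(diag_elem P \<longlongrightarrow> e) F"
    using approx_unit[of e] by (simp add: unit)
  ultimately show "approx_inner l r D"
    by (rule approx_inner_if_commutators_tend_to_unit[where l = l and r = r and D = D,
          OF bimodule derivation_rule unit \<open>F \<noteq> bot\<close>])
qed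

end
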